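(* Let $x=(x_1,\dots,x_p)$ and $y=(y_1,\dots,y_q)$ be disjoint tuples of variables, let $G(x)$, $H(y)$, $K(y)$ be homogeneous polynomials with $G\cdot H$ and $K$ homogeneous of the same degree $d$, and let $F = G(x)H(y)+K(y)$. Let $\alpha=\partial/\partial x_j$ for some $j$. Then $$r(F) \geq \big(\mathrm{al}(\alpha\circ G)-\mathrm{al}(\alpha^2\circ G)\big)\cdot \mathrm{al}(H).$$ In particular, for any $a\ge 1$, $r(x_1^a H(y)+K(y)) \geq \mathrm{al}(H)$.
   Context: Apolarity: differential operators $\partial/\partial x_i$, $\partial/\partial y_i$ act on polynomials by differentiation, written $\Theta\circ F$. $\mathrm{al}(G)$ is the apolar length: the dimension over $\mathbb{C}$ of the space of all partial derivatives of all orders of $G$ (including $G$ itself; $0$ if $G=0$). $r(F)$ is the Waring rank of $F$: the least $r$ with $F=\sum_{i=1}^r c_i\ell_i^d$ for linear forms $\ell_i$ and scalars $c_i$. *)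

theory Defs
  imports Complex_Main "HOL-Library.Poly_Mapping"
begin

type_synonym cpoly = "(nat \<Rightarrow>\<^sub>0 nat) \<Rightarrow>\<^sub>0 complex"

definition cscale :: "complex \<Rightarrow> cpoly \<Rightarrow> cpoly" where
  "cscale c p = Poly_Mapping.map (\<lambda>a. c * a) p"

definition pvar :: "nat \<Rightarrow> cpoly" where
  "pvar i = Poly_Mapping.single (Poly_Mapping.single i 1) 1"

definition mon_deg :: "(nat \<Rightarrow>\<^sub>0 nat) \<Rightarrow> nat" where
  "mon_deg m = (\<Sum>i\<in>Poly_Mapping.keys m. Poly_Mapping.lookup m i)"

definition homogeneous :: "nat \<Rightarrow> cpoly \<Rightarrow> bool" where
  "homogeneous d p \<longleftrightarrow> (\<forall>m\<in>Poly_Mapping.keys p. mon_deg m = d)"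

definition pvars :: "cpoly \<Rightarrow> nat set" where
  "pvars p = (\<Union>m\<in>Poly_Mapping.keys p. Poly_Mapping.keys m)"

lift_definition pderiv_var :: "nat \<Rightarrow> cpoly \<Rightarrow> cpoly" is
  "\<lambda>i p m. of_nat (Poly_Mapping.lookup m i + 1) * Poly_Mapping.lookup p (m + Poly_Mapping.single i 1)"
proof -
  fix i and p :: "(nat \<Rightarrow>\<^sub>0 nat) \<Rightarrow>\<^sub>0 complex"
  have "{m. of_nat (Poly_Mapping.lookup m i + 1) * Poly_Mapping.lookup p (m + Poly_Mapping.single i 1) \<noteq> (0::complex)}
        \<subseteq> (\<lambda>m. m - Poly_Mapping.single i 1) ` Poly_Mapping.keys p"
  proof
    fix m assume "m \<in> {m. of_nat (Poly_Mapping.lookup m i + 1) * Poly_Mapping.lookup p (m + Poly_Mapping.single i 1) \<noteq> (0::complex)}"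
    then have "of_nat (Poly_Mapping.lookup m i + 1) * Poly_Mapping.lookup p (m + Poly_Mapping.single i 1) \<noteq> (0::complex)"
      by (rule CollectD)
    then have "Poly_Mapping.lookup p (m + Poly_Mapping.single i 1) \<noteq> 0"
      by (metis mult_zero_right)
    then have "m + Poly_Mapping.single i 1 \<in> Poly_Mapping.keys p"
      unfolding in_keys_iff .
    moreover have "m = (m + Poly_Mapping.single i 1) - Poly_Mapping.single i 1"
      by (rule add_diff_cancel_right'[symmetric])
    ultimately show "m \<in> (\<lambda>m. m - Poly_Mapping.single i 1) ` Poly_Mapping.keys p"
      by (rule image_eqI[rotated])
  qed
  then show "finite {m. of_nat (Poly_Mapping.lookup m i + 1) * Poly_Mapping.lookup p (m + Poly_Mapping.single i 1) \<noteq> (0::complex)}"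
    by (rule finite_subset[OF _ finite_imageI[OF finite_keys]])
qed

inductive_set all_derivs :: "cpoly \<Rightarrow> cpoly set" for G where
  self: "G \<in> all_derivs G"
| step: "p \<in> all_derivs G \<Longrightarrow> pderiv_var i p \<in> all_derivs G"

definition apolar_length :: "cpoly \<Rightarrow> nat" where
  "apolar_length G = vector_space.dim cscale (all_derivs G)"

definition linear_form_in :: "nat set \<Rightarrow> cpoly \<Rightarrow> bool" where
  "linear_form_in V l \<longleftrightarrow> homogeneous 1 l \<and> pvars l \<subseteq> V"

definition waring_rank :: "nat set \<Rightarrow> nat \<Rightarrow> cpoly \<Rightarrow> nat" where
  "waring_rank V d F = (LEAST r. \<exists>c l. (\<forall>i<r. linear_form_in V (l i))
       \<and> F = (\<Sum>i<r. cscale (c i) (l i ^ d)))"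

end

(*
  Let F = \<Sum>i<r. c\<^sub>i \<ell>\<^sub>i\<^sup>d be a Waring decomposition (one exists by polarization, so the
  LEAST in waring_rank is attained).  In \<alpha>\<circ>F only the r' \<le> r powers with \<alpha>\<circ>\<ell>\<^sub>i \<noteq> 0 survive, and a
  derivative of order t of \<alpha>\<circ>F is the image, under a linear map depending only on t, of a
  coefficient vector in \<complex>\<^sup>r\<^sup>'.  Normalised suitably, these vectors are unchanged by a further \<alpha>, so
  they span an increasing chain of subspaces of \<complex>\<^sup>r\<^sup>', and only the new directions of the chain
  produce derivatives that are not derivatives of \<alpha>\<^sup>2\<circ>F.  Hence al(\<alpha>\<circ>F) \<le> al(\<alpha>\<^sup>2\<circ>F) + r.
  For F = G(x)H(y) + K(y) we have \<alpha>\<circ>F = (\<alpha>\<circ>G)H, and the apolar length is multiplicative on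
  products of polynomials in disjoint variables.  For G = x\<^sub>1\<^sup>a the form \<alpha>\<circ>G is nonzero, so its
  apolar length exceeds that of its derivative \<alpha>\<^sup>2\<circ>G.
*)

theory Submission
  imports Defs "HOL-Library.FuncSet"
begin

abbreviation lookup :: "('a \<Rightarrow>\<^sub>0 'b::zero) \<Rightarrow> 'a \<Rightarrow> 'b" where "lookup \<equiv> Poly_Mapping.lookup"
abbreviation keys :: "('a \<Rightarrow>\<^sub>0 'b::zero) \<Rightarrow> 'a set" where "keys \<equiv> Poly_Mapping.keys"
abbreviation single :: "'a \<Rightarrow> 'b::zero \<Rightarrow> 'a \<Rightarrow>\<^sub>0 'b" where "single \<equiv> Poly_Mapping.single"

lemma lookup_cscale [simp]: "lookup (cscale c p) m = c * lookup p m"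
  unfolding cscale_def by (simp add: Poly_Mapping.map.rep_eq when_def)

lemma cscale_eq_mult: "cscale c p = single 0 c * p"
  unfolding cscale_def by (rule mult_map_scale_conv_mult)

interpretation cpoly: vector_space cscale
  by unfold_locales (simp_all add: poly_mapping_eq_iff fun_eq_iff lookup_add algebra_simps)

lemma cscale_single: "cscale c (single m a) = single m (c * a)"
  by (rule poly_mapping_eqI) (simp add: lookup_single when_def)

lemma cscale_mult_left: "cscale c p * q = cscale c (p * q)"
  by (simp add: cscale_eq_mult mult.assoc)

lemma cscale_mult_right: "p * cscale c q = cscale c (p * q)"
  by (simp add: cscale_eq_mult mult.left_commute)

lemma cpoly_eq_sum_single: "(p::cpoly) = (\<Sum>m\<in>keys p. single m (lookup p m))"
  by (rule poly_mapping_eqI) (simp add: lookup_sum lookup_single when_def in_keys_iff)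

lemma cpoly_induct [case_names zero single add]:
  assumes "P 0" and "\<And>m c. m \<in> keys p \<Longrightarrow> P (single m c)"
    and "\<And>a b. P a \<Longrightarrow> P b \<Longrightarrow> P (a + b)"
  shows "P (p::cpoly)"
proof -
  have "P (\<Sum>m\<in>S. single m (lookup p m))" if "S \<subseteq> keys p" for S
  proof -
    from that have "finite S" by (rule finite_subset) simp
    then show ?thesis using that by induction (auto intro: assms)
  qed
  then show ?thesis by (subst cpoly_eq_sum_single) simp
qed

lemma module_hom_cpolyI:
  assumes "\<And>a b. f (a + b) = f a + f b" and "\<And>c a. f (cscale c a) = cscale c (f a)"
  shows "module_hom cscale cscale f"
  by (intro module_hom.intro module_hom_axioms.intro cpoly.module_axioms assms)

lemma single_zero_power: "(single 0 a :: cpoly) ^ k = single 0 (a ^ k)"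
  by (induction k) (simp_all add: mult_single)

lemma pvar_power: "pvar i ^ n = single (single i n) 1"
  by (induction n) (simp_all add: pvar_def mult_single flip: single_add)

lemma lookup_pderiv: "lookup (pderiv_var i p) m = of_nat (lookup m i + 1) * lookup p (m + single i 1)"
  by (simp add: pderiv_var.rep_eq)

lemma pderiv_add: "pderiv_var i (p + q) = pderiv_var i p + pderiv_var i q"
  by (rule poly_mapping_eqI) (simp add: lookup_pderiv lookup_add distrib_left)

lemma pderiv_cscale: "pderiv_var i (cscale c p) = cscale c (pderiv_var i p)"
  by (rule poly_mapping_eqI) (simp add: lookup_pderiv)

interpretation pderiv: module_hom cscale cscale "pderiv_var i" for i
  by (rule module_hom_cpolyI) (rule pderiv_add pderiv_cscale)+

lemma pderiv_single: "pderiv_var i (single m c) = single (m - single i 1) (of_nat (lookup m i) * c)"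
proof (cases "lookup m i = 0")
  case True
  then have "m \<noteq> m' + single i 1" for m'
    by (auto simp: lookup_add dest: arg_cong[where f="\<lambda>m. lookup m i"])
  then show ?thesis
    using True by (intro poly_mapping_eqI) (simp add: lookup_pderiv lookup_single when_def)
next
  case False
  then have m: "m = (m - single i 1) + single i 1"
    by (intro poly_mapping_eqI) (auto simp: lookup_add lookup_minus lookup_single when_def)
  then have "(m' + single i 1 = m) = (m - single i 1 = m')" for m'
    by (metis add_diff_cancel_right')
  then show ?thesis
    using m by (intro poly_mapping_eqI) (auto simp: lookup_pderiv lookup_single lookup_add when_def)
qed

lemma single_minus_add_weighted:
  "single (a - single i 1 + b) (of_nat (lookup a i) * c) = single (a + b - single i 1) (of_nat (lookup a i) * c)"
proof (cases "lookup a i = 0")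
  case False
  then have "a - single i 1 + b = a + b - single i 1"
    by (intro poly_mapping_eqI) (auto simp: lookup_add lookup_minus lookup_single when_def)
  then show ?thesis by simp
qed simp

lemma pderiv_mult: "pderiv_var i (p * q) = pderiv_var i p * q + p * pderiv_var i q"
proof -
  have monomials: "pderiv_var i (single a c * single b d)
      = pderiv_var i (single a c) * single b d + single a c * pderiv_var i (single b d)" for a b c d
  proof -
    have "pderiv_var i (single a c * single b d)
        = single (a + b - single i 1) (of_nat (lookup a i) * (c * d) + of_nat (lookup b i) * (c * d))"
      by (simp add: mult_single pderiv_single lookup_add distrib_right)
    also have "\<dots> = single (a - single i 1 + b) (of_nat (lookup a i) * (c * d))
        + single (b - single i 1 + a) (of_nat (lookup b i) * (c * d))"
      unfolding single_minus_add_weighted add.commute[of b a] single_add ..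
    finally show ?thesis
      by (simp add: mult_single pderiv_single ac_simps)
  qed
  show ?thesis
  proof (induction p rule: cpoly_induct)
    case (single a c)
    show ?case
      by (induction q rule: cpoly_induct) (simp_all add: monomials distrib_left pderiv.add)
  qed (simp_all add: distrib_right pderiv.add)
qed

lemma pderiv_one [simp]: "pderiv_var i 1 = 0"
  using pderiv_single[of i 0 1] by simp

lemma pderiv_power: "pderiv_var i (p ^ n) = of_nat n * p ^ (n - 1) * pderiv_var i p"
proof (induction n)
  case (Suc n)
  then show ?case by (cases n) (simp_all add: pderiv_mult algebra_simps)
qed simp

lemma pvars_add: "pvars (p + q) \<subseteq> pvars p \<union> pvars q"
  using keys_add[of p q] by (auto simp: pvars_def)

lemma pvars_sum: "pvars (sum f S) \<subseteq> (\<Union>x\<in>S. pvars (f x))"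
proof (induction S rule: infinite_finite_induct)
  case (insert x F)
  then show ?case using pvars_add[of "f x" "sum f F"] by auto
qed (simp_all add: pvars_def)

lemma pvars_mult: "pvars (p * q) \<subseteq> pvars p \<union> pvars q"
proof
  fix i assume "i \<in> pvars (p * q)"
  then obtain m where m: "m \<in> keys (p * q)" "i \<in> keys m" by (auto simp: pvars_def)
  then obtain a b where "a \<in> keys p" "b \<in> keys q" "m = a + b" using keys_mult[of p q] by blast
  with m show "i \<in> pvars p \<union> pvars q" by (auto simp: pvars_def in_keys_iff lookup_add)
qed

lemma pvars_power: "pvars (p ^ n) \<subseteq> pvars p"
proof (induction n)
  case (Suc n)
  then show ?case using pvars_mult[of p "p ^ n"] by auto
qed (simp add: pvars_def)

lemma pvars_pvar [simp]: "pvars (pvar i) = {i}"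
  by (simp add: pvars_def pvar_def)

lemma keys_pderiv: "m \<in> keys (pderiv_var i p) \<Longrightarrow> m + single i 1 \<in> keys p"
  by (auto simp: in_keys_iff lookup_pderiv)

lemma pvars_pderiv: "pvars (pderiv_var i p) \<subseteq> pvars p"
  by (auto simp: pvars_def in_keys_iff lookup_add dest!: keys_pderiv)

lemma pderiv_eq_0_if_not_in_pvars: "i \<notin> pvars p \<Longrightarrow> pderiv_var i p = 0"
proof (rule poly_mapping_eqI)
  fix m :: "nat \<Rightarrow>\<^sub>0 nat"
  assume "i \<notin> pvars p"
  have "i \<in> keys (m + single i 1)" by (simp add: in_keys_iff lookup_add)
  with \<open>i \<notin> pvars p\<close> have "m + single i 1 \<notin> keys p" by (auto simp: pvars_def)
  then have "lookup p (m + single i 1) = 0" by (simp add: in_keys_iff)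
  then show "lookup (pderiv_var i p) m = lookup 0 m" by (simp add: lookup_pderiv)
qed

lemma mon_deg_add: "mon_deg (a + b) = mon_deg a + mon_deg b"
proof -
  have deg: "mon_deg m = (\<Sum>i\<in>keys a \<union> keys b. lookup m i)" if "keys m \<subseteq> keys a \<union> keys b" for m
    unfolding mon_deg_def using that by (intro sum.mono_neutral_left) (auto simp: in_keys_iff)
  show ?thesis
    by (subst (1 2 3) deg) (auto simp: in_keys_iff lookup_add sum.distrib)
qed

lemma mon_deg_single [simp]: "mon_deg (single i n) = n"
  by (simp add: mon_deg_def)

lemma mon_deg_eq_0_iff: "mon_deg m = 0 \<longleftrightarrow> m = 0"
  by (auto simp: mon_deg_def poly_mapping_eq_iff fun_eq_iff in_keys_iff)

lemma homogeneous_add: "homogeneous d p \<Longrightarrow> homogeneous d q \<Longrightarrow> homogeneous d (p + q)"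
  using keys_add[of p q] by (auto simp: homogeneous_def)

lemma homogeneous_sum: "(\<And>x. x \<in> S \<Longrightarrow> homogeneous d (f x)) \<Longrightarrow> homogeneous d (sum f S)"
proof (induction S rule: infinite_finite_induct)
  case (insert x F)
  then show ?case by (simp add: homogeneous_add)
qed (simp_all add: homogeneous_def)

lemma homogeneous_pvar: "homogeneous 1 (pvar i)"
  by (simp add: homogeneous_def pvar_def mon_deg_def)

definition lin_coeff :: "cpoly \<Rightarrow> nat \<Rightarrow> complex" where
  "lin_coeff l i = lookup l (single i 1)"

lemma lin_coeff_pvar: "lin_coeff (pvar k) i = (if k = i then 1 else 0)"
  unfolding lin_coeff_def pvar_def lookup_single
  by (metis (mono_tags) lookup_single_eq lookup_single_not_eq one_neq_zero when_simps)

lemma lin_coeff_sum: "lin_coeff (sum f S) i = (\<Sum>x\<in>S. lin_coeff (f x) i)"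
  by (simp add: lin_coeff_def lookup_sum)

lemma lin_coeff_add: "lin_coeff (p + q) i = lin_coeff p i + lin_coeff q i"
  by (simp add: lin_coeff_def lookup_add)

lemma lin_coeff_cscale [simp]: "lin_coeff (cscale a p) i = a * lin_coeff p i"
  by (simp add: lin_coeff_def)

lemma pderiv_linear_form: "homogeneous 1 l \<Longrightarrow> pderiv_var i l = single 0 (lin_coeff l i)"
proof (rule poly_mapping_eqI)
  fix m :: "nat \<Rightarrow>\<^sub>0 nat"
  assume l: "homogeneous 1 l"
  show "lookup (pderiv_var i l) m = lookup (single 0 (lin_coeff l i)) m"
  proof (cases "m = 0")
    case False
    then have "mon_deg (m + single i 1) \<noteq> 1" by (simp add: mon_deg_add mon_deg_eq_0_iff)
    then have "m + single i 1 \<notin> keys l" using l by (auto simp: homogeneous_def)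
    then show ?thesis using False by (simp add: lookup_pderiv in_keys_iff lookup_single)
  qed (simp add: lookup_pderiv lin_coeff_def)
qed

lemma pderiv_linear_form_power:
  "homogeneous 1 l \<Longrightarrow> pderiv_var i (l ^ n) = cscale (of_nat n * lin_coeff l i) (l ^ (n - 1))"
  by (simp add: pderiv_power pderiv_linear_form cscale_eq_mult mult_single mult.commute
      flip: single_of_nat)

definition pderivs :: "nat list \<Rightarrow> cpoly \<Rightarrow> cpoly" where
  "pderivs js p = foldr pderiv_var js p"

lemma pderivs_Nil [simp]: "pderivs [] p = p"
  and pderivs_Cons [simp]: "pderivs (j # js) p = pderiv_var j (pderivs js p)"
  by (simp_all add: pderivs_def)

lemma pderivs_append: "pderivs (xs @ ys) p = pderivs xs (pderivs ys p)"
  by (simp add: pderivs_def)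

interpretation pderivs: module_hom cscale cscale "pderivs js" for js
  by (rule module_hom_cpolyI) (induction js; simp add: pderiv.add pderiv.scale)+

lemma pvars_pderivs: "pvars (pderivs js p) \<subseteq> pvars p"
  by (induction js) (use pvars_pderiv in auto)

lemma all_derivs_eq: "all_derivs p = range (\<lambda>js. pderivs js p)"
proof (intro set_eqI iffI)
  show "q \<in> range (\<lambda>js. pderivs js p)" if "q \<in> all_derivs p" for q
    using that by induction (auto intro: range_eqI[of _ _ "[]"] range_eqI[of _ _ "_ # _"])
  show "q \<in> all_derivs p" if "q \<in> range (\<lambda>js. pderivs js p)" for q
  proof -
    have "pderivs js p \<in> all_derivs p" for js
      by (induction js) (auto intro: all_derivs.intros)
    then show ?thesis using that by blast
  qed
qed

lemma pvars_all_derivs: "q \<in> all_derivs p \<Longrightarrow> pvars q \<subseteq> pvars p"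
  using pvars_pderivs by (auto simp: all_derivs_eq)

lemma pderivs_linear_form_power:
  assumes "homogeneous 1 l"
  shows "pderivs js (l ^ e)
    = cscale ((\<Prod>k<length js. of_nat (e - k)) * prod_list (map (lin_coeff l) js)) (l ^ (e - length js))"
  by (induction js) (simp_all add: pderiv.scale pderiv_linear_form_power[OF assms] algebra_simps)

section \<open>Finitely spanned sets of polynomials\<close>

definition finitely_spanned :: "cpoly set \<Rightarrow> bool" where
  "finitely_spanned S \<longleftrightarrow> (\<exists>T. finite T \<and> S \<subseteq> cpoly.span T)"

lemma cpoly_span_subset_span: "A \<subseteq> cpoly.span B \<Longrightarrow> cpoly.span A \<subseteq> cpoly.span B"
  by (rule cpoly.span_minimal) (simp_all add: cpoly.subspace_span)

lemma finitely_spanned_Un_finite: "finitely_spanned A \<Longrightarrow> finite B \<Longrightarrow> finitely_spanned (A \<union> B)"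
proof -
  assume "finitely_spanned A" "finite B"
  then obtain T where "finite T" "A \<subseteq> cpoly.span T" by (auto simp: finitely_spanned_def)
  moreover have "cpoly.span T \<union> B \<subseteq> cpoly.span (T \<union> B)"
    using cpoly.span_mono[of T "T \<union> B"] cpoly.span_superset[of "T \<union> B"] by blast
  ultimately show ?thesis using \<open>finite B\<close> unfolding finitely_spanned_def by blast
qed

lemma finitely_spanned_basis:
  assumes "finitely_spanned S"
  obtains B where "B \<subseteq> S" "cpoly.independent B" "S \<subseteq> cpoly.span B" "card B = cpoly.dim S" "finite B"
proof -
  obtain T where T: "finite T" "S \<subseteq> cpoly.span T" using assms finitely_spanned_def by blast
  obtain B where B: "B \<subseteq> S" "cpoly.independent B" "S \<subseteq> cpoly.span B" "card B = cpoly.dim S"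
    using cpoly.basis_exists[of S] by blast
  have "B \<subseteq> cpoly.span T" using B(1) T(2) by blast
  then have "finite B" using cpoly.independent_span_bound[OF T(1) B(2)] by blast
  with B show ?thesis by (intro that)
qed

lemma dim_le_dim_if_subset_span:
  assumes "V \<subseteq> cpoly.span W" "finitely_spanned W"
  shows "cpoly.dim V \<le> cpoly.dim W"
proof -
  obtain B where B: "W \<subseteq> cpoly.span B" "card B = cpoly.dim W" "finite B"
    using finitely_spanned_basis[OF assms(2)] by blast
  have "V \<subseteq> cpoly.span B" using assms(1) cpoly_span_subset_span[OF B(1)] by blast
  from cpoly.dim_le_card[OF this B(3)] show ?thesis unfolding B(2) .
qed

lemma dim_Un_finite_le:
  assumes "finitely_spanned S" "finite N"
  shows "cpoly.dim (S \<union> N) \<le> cpoly.dim S + card N"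
proof -
  obtain B where B: "S \<subseteq> cpoly.span B" "card B = cpoly.dim S" "finite B"
    using finitely_spanned_basis[OF assms(1)] by blast
  have "S \<union> N \<subseteq> cpoly.span (B \<union> N)"
    using B(1) cpoly.span_mono[of B "B \<union> N"] cpoly.span_superset[of "B \<union> N"] by blast
  then have "cpoly.dim (S \<union> N) \<le> card (B \<union> N)" using B(3) assms(2) by (simp add: cpoly.dim_le_card)
  also have "\<dots> \<le> card B + card N" by (rule card_Un_le)
  finally show ?thesis using B(2) by simp
qed

lemma dim_insert_not_in_span:
  assumes "finitely_spanned S" "x \<notin> cpoly.span S"
  shows "cpoly.dim (insert x S) = cpoly.dim S + 1"
proof -
  obtain B where B: "B \<subseteq> S" "cpoly.independent B" "S \<subseteq> cpoly.span B" "card B = cpoly.dim S" "finite B"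
    using finitely_spanned_basis[OF assms(1)] by blast
  have x: "x \<notin> cpoly.span B" using assms(2) cpoly.span_mono[OF B(1)] by blast
  have "insert x S \<subseteq> cpoly.span (insert x B)"
    using B(3) cpoly.span_mono[of B "insert x B"] cpoly.span_base[of x "insert x B"] by blast
  moreover have "insert x B \<subseteq> insert x S" using B(1) by blast
  ultimately have "card (insert x B) = cpoly.dim (insert x S)"
    using cpoly.basis_card_eq_dim cpoly.independent_insertI[OF x B(2)] by blast
  moreover have "x \<notin> B" using x cpoly.span_base by blast
  ultimately show ?thesis using B(4,5) by simp
qed

lemma obtain_span_complement:
  assumes "finitely_spanned U" "U' \<subseteq> cpoly.span U"
  obtains N where "finite N" "card N = cpoly.dim U - cpoly.dim U'" "cpoly.dim U' \<le> cpoly.dim U"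
    "U \<subseteq> cpoly.span (U' \<union> N)"
proof -
  obtain B' where B': "B' \<subseteq> U'" "cpoly.independent B'" "U' \<subseteq> cpoly.span B'" "card B' = cpoly.dim U'"
    using cpoly.basis_exists by blast
  have "B' \<subseteq> cpoly.span U" using B'(1) assms(2) by blast
  then obtain B where B: "B' \<subseteq> B" "B \<subseteq> cpoly.span U" "cpoly.independent B" "cpoly.span U \<subseteq> cpoly.span B"
    using cpoly.maximal_independent_subset_extend[OF _ B'(2)] by metis
  obtain T where T: "finite T" "U \<subseteq> cpoly.span T" using assms(1) finitely_spanned_def by blast
  have "B \<subseteq> cpoly.span T" using B(2) cpoly_span_subset_span[OF T(2)] by blast
  then have fin: "finite B" using cpoly.independent_span_bound[OF T(1) B(3)] by blast
  have "card B = cpoly.dim U"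
    using cpoly.basis_card_eq_dim[OF B(2) B(4) B(3)] by simp
  moreover have "card (B - B') = card B - card B'" "card B' \<le> card B"
    using B(1) fin by (simp_all add: card_Diff_subset finite_subset card_mono)
  moreover have "U \<subseteq> cpoly.span (U' \<union> (B - B'))"
    using B(4) B'(1) cpoly.span_mono[of B "U' \<union> (B - B')"] cpoly.span_superset[of U] by blast
  ultimately show ?thesis using that[of "B - B'"] fin B'(4) by simp
qed

lemma chain_span_complements:
  assumes "finite B" "\<And>t. U t \<subseteq> cpoly.span B" "\<And>t. U t \<subseteq> cpoly.span (U (Suc t))"
  obtains N where "\<And>t. finite (N t)" "\<And>t. U t \<subseteq> cpoly.span ((\<Union>s<t. U s) \<union> N t)"
    "\<And>n. (\<Sum>t\<le>n. card (N t)) \<le> card B"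
proof -
  have below: "U s \<subseteq> cpoly.span (U t)" if "s \<le> t" for s t
    using that
  proof (induction t rule: dec_induct)
    case (step t)
    then show ?case using assms(3)[of t] cpoly_span_subset_span by blast
  qed (rule cpoly.span_superset)
  have fs: "finitely_spanned (U t)" for t
    using assms(1,2) unfolding finitely_spanned_def by blast
  have span_before: "cpoly.span (\<Union>s<Suc t. U s) = cpoly.span (U t)" for t
  proof (intro antisym cpoly_span_subset_span)
    show "(\<Union>s<Suc t. U s) \<subseteq> cpoly.span (U t)" by (rule UN_least) (simp add: below)
    show "U t \<subseteq> cpoly.span (\<Union>s<Suc t. U s)" by (rule order_trans[OF _ cpoly.span_superset]) auto
  qed
  have "\<forall>t. \<exists>N. finite N \<and> card N = cpoly.dim (U t) - cpoly.dim (\<Union>s<t. U s)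
      \<and> cpoly.dim (\<Union>s<t. U s) \<le> cpoly.dim (U t) \<and> U t \<subseteq> cpoly.span ((\<Union>s<t. U s) \<union> N)"
  proof
    fix t
    have "(\<Union>s<t. U s) \<subseteq> cpoly.span (U t)" by (rule UN_least) (simp add: below)
    from obtain_span_complement[OF fs this] show "\<exists>N. finite N \<and> card N = cpoly.dim (U t) - cpoly.dim (\<Union>s<t. U s)
      \<and> cpoly.dim (\<Union>s<t. U s) \<le> cpoly.dim (U t) \<and> U t \<subseteq> cpoly.span ((\<Union>s<t. U s) \<union> N)"
      by blast
  qed
  from choice[OF this] obtain N where N: "\<And>t. finite (N t)"
    "\<And>t. card (N t) = cpoly.dim (U t) - cpoly.dim (\<Union>s<t. U s)"
    "\<And>t. cpoly.dim (\<Union>s<t. U s) \<le> cpoly.dim (U t)" "\<And>t. U t \<subseteq> cpoly.span ((\<Union>s<t. U s) \<union> N t)"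
    by blast
  have dim_before: "cpoly.dim (\<Union>s<Suc t. U s) = cpoly.dim (U t)" for t
    by (metis cpoly.dim_span span_before)
  have sum: "(\<Sum>t\<le>n. card (N t)) = cpoly.dim (U n)" for n
  proof (induction n)
    case 0
    then show ?case using N(2)[of 0] cpoly.dim_eq_card_independent[OF cpoly.independent_empty] by simp
  next
    case (Suc n)
    then show ?case using N(2,3)[of "Suc n"] by (simp add: dim_before)
  qed
  show ?thesis
  proof (rule that)
    show "(\<Sum>t\<le>n. card (N t)) \<le> card B" for n
      unfolding sum using assms(2) assms(1) by (rule cpoly.dim_le_card)
  qed (fact N)+
qed

lemma finite_monomials_below: "finite {m :: nat \<Rightarrow>\<^sub>0 nat. \<forall>k. lookup m k \<le> lookup m' k}"
proof -
  let ?A = "{m :: nat \<Rightarrow>\<^sub>0 nat. \<forall>k. lookup m k \<le> lookup m' k}"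
  let ?f = "\<lambda>m::nat \<Rightarrow>\<^sub>0 nat. restrict (lookup m) (keys m')"
  have "?f ` ?A \<subseteq> PiE (keys m') (\<lambda>k. {..lookup m' k})" by (auto simp: restrict_PiE_iff)
  then have "finite (?f ` ?A)" by (rule finite_subset) (simp add: finite_PiE)
  moreover have "inj_on ?f ?A"
  proof (rule inj_onI, rule poly_mapping_eqI)
    fix a b k assume a: "a \<in> ?A" and b: "b \<in> ?A" and eq: "?f a = ?f b"
    show "lookup a k = lookup b k"
    proof (cases "k \<in> keys m'")
      case True
      with eq show ?thesis by (metis restrict_apply')
    next
      case False
      then have "lookup m' k = 0" by (simp add: in_keys_iff)
      with a b show ?thesis by (metis (mono_tags) le_zero_eq mem_Collect_eq)
    qed
  qed
  ultimately show ?thesis using finite_imageD by blast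
qed

lemma finitely_spanned_all_derivs: "finitely_spanned (all_derivs p)"
proof -
  define M where "M = (\<Union>m'\<in>keys p. {m. \<forall>k. lookup m k \<le> lookup m' k})"
  have keys_M: "keys (pderivs js p) \<subseteq> M" for js
  proof (induction js)
    case (Cons j js)
    show ?case
    proof
      fix m assume "m \<in> keys (pderivs (j # js) p)"
      then have "m + single j 1 \<in> M" using Cons keys_pderiv by auto
      then show "m \<in> M" unfolding M_def by (auto simp: lookup_add intro: le_trans[OF le_add1])
    qed
  qed (auto simp: M_def)
  have "q \<in> cpoly.span ((\<lambda>m. single m 1) ` M)" if "keys q \<subseteq> M" for q
  proof -
    have "q = (\<Sum>m\<in>keys q. cscale (lookup q m) (single m 1))"
      by (subst cpoly_eq_sum_single) (simp add: cscale_single)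
    also have "\<dots> \<in> cpoly.span ((\<lambda>m. single m 1) ` M)"
      using that by (intro cpoly.span_sum cpoly.span_scale cpoly.span_base) auto
    finally show ?thesis .
  qed
  moreover have "finite M" unfolding M_def using finite_monomials_below by simp
  ultimately show ?thesis
    unfolding finitely_spanned_def using keys_M by (auto simp: all_derivs_eq)
qed

lemma pderiv_in_span_all_derivs:
  "q \<in> cpoly.span (all_derivs p) \<Longrightarrow> pderiv_var i q \<in> cpoly.span (all_derivs p)"
  using pderiv.span_image[of i "all_derivs p"] cpoly.span_mono[of "pderiv_var i ` all_derivs p"]
  by (auto intro: all_derivs.step)

section \<open>Products of polynomials in disjoint sets of variables\<close>

lemma pderiv_mult_separated:
  assumes "pvars a \<subseteq> X" "pvars h \<subseteq> Y" "X \<inter> Y = {}"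
  shows "pderiv_var i (a * h) = (if i \<in> X then pderiv_var i a * h else a * pderiv_var i h)"
proof (cases "i \<in> X")
  case True
  then have "i \<notin> pvars h" using assms by blast
  with True show ?thesis by (simp add: pderiv_mult pderiv_eq_0_if_not_in_pvars)
next
  case False
  then have "i \<notin> pvars a" using assms by blast
  with False show ?thesis by (simp add: pderiv_mult pderiv_eq_0_if_not_in_pvars)
qed

lemma pderivs_mult_separated:
  assumes "pvars A \<subseteq> X" "pvars H \<subseteq> Y" "X \<inter> Y = {}"
  obtains a h where "a \<in> all_derivs A" "h \<in> all_derivs H" "pderivs js (A * H) = a * h"
proof (induction js arbitrary: thesis)
  case Nil
  then show ?case by (auto intro: all_derivs.self)
next
  case (Cons i js)
  then obtain a h where ah: "a \<in> all_derivs A" "h \<in> all_derivs H" "pderivs js (A * H) = a * h"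
    by blast
  have "pvars a \<subseteq> X" "pvars h \<subseteq> Y" using assms pvars_all_derivs ah by blast+
  then have "pderivs (i # js) (A * H) = (if i \<in> X then pderiv_var i a * h else a * pderiv_var i h)"
    using assms(3) ah(3) by (simp add: pderiv_mult_separated)
  with ah(1,2) show ?case by (auto intro: Cons.prems all_derivs.step split: if_splits)
qed

lemma mult_mem_span_all_derivs_mult:
  assumes "pvars A \<subseteq> X" "pvars H \<subseteq> Y" "X \<inter> Y = {}"
    and "a \<in> all_derivs A" "h \<in> all_derivs H"
  shows "a * h \<in> cpoly.span (all_derivs (A * H))"
  using assms(4,5)
proof (induction a arbitrary: h rule: all_derivs.induct)
  case self
  then show ?case
  proof (induction h rule: all_derivs.induct)
    case (step h i)
    have "pvars h \<subseteq> Y" using assms(2) pvars_all_derivs step.hyps by blast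
    then have "i \<in> X \<Longrightarrow> pderiv_var i h = 0" using assms(3) by (blast intro: pderiv_eq_0_if_not_in_pvars)
    with \<open>pvars h \<subseteq> Y\<close> have "A * pderiv_var i h = (if i \<in> X then 0 else pderiv_var i (A * h))"
      using assms(1,3) by (simp add: pderiv_mult_separated)
    then show ?case using step.IH by (simp add: pderiv_in_span_all_derivs cpoly.span_zero)
  qed (auto intro: cpoly.span_base all_derivs.self)
next
  case (step a i)
  have "pvars a \<subseteq> X" "pvars h \<subseteq> Y" using assms(1,2) pvars_all_derivs step by blast+
  moreover from this have "i \<notin> X \<Longrightarrow> pderiv_var i a = 0" by (blast intro: pderiv_eq_0_if_not_in_pvars)
  ultimately have "pderiv_var i a * h = (if i \<in> X then pderiv_var i (a * h) else 0)"
    using assms(3) by (simp add: pderiv_mult_separated)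
  then show ?case using step.IH[OF step.prems] by (simp add: pderiv_in_span_all_derivs cpoly.span_zero)
qed

lemma mult_mem_span_products:
  assumes "a \<in> cpoly.span A" "h \<in> cpoly.span B"
  shows "a * h \<in> cpoly.span ((\<lambda>(x, y). x * y) ` (A \<times> B))"
proof -
  let ?P = "(\<lambda>(x, y). x * y) ` (A \<times> B)"
  have hom: "module_hom cscale cscale (\<lambda>q. p * q)" "module_hom cscale cscale (\<lambda>q. q * p)" for p
    by (auto intro!: module_hom_cpolyI simp: distrib_left distrib_right cscale_mult_left cscale_mult_right)
  have "x * h \<in> cpoly.span ?P" if "x \<in> A" for x
  proof -
    have "x * h \<in> cpoly.span ((\<lambda>q. x * q) ` B)" using module_hom.span_image[OF hom(1)] assms(2) by blast
    moreover have "(\<lambda>q. x * q) ` B \<subseteq> ?P" using that by auto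
    ultimately show ?thesis using cpoly.span_mono by blast
  qed
  moreover have "a * h \<in> cpoly.span ((\<lambda>q. q * h) ` A)" using module_hom.span_image[OF hom(2)] assms(1) by blast
  ultimately show ?thesis using cpoly_span_subset_span[of "(\<lambda>q. q * h) ` A" ?P] by blast
qed

lemma apolar_length_mult_le:
  assumes "pvars A \<subseteq> X" "pvars H \<subseteq> Y" "X \<inter> Y = {}"
  shows "apolar_length (A * H) \<le> apolar_length A * apolar_length H"
proof -
  obtain BA where BA: "all_derivs A \<subseteq> cpoly.span BA" "card BA = apolar_length A" "finite BA"
    using finitely_spanned_basis[OF finitely_spanned_all_derivs] unfolding apolar_length_def by blast
  obtain BH where BH: "all_derivs H \<subseteq> cpoly.span BH" "card BH = apolar_length H" "finite BH"
    using finitely_spanned_basis[OF finitely_spanned_all_derivs] unfolding apolar_length_def by blast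
  let ?P = "(\<lambda>(x, y). x * y) ` (BA \<times> BH)"
  have "all_derivs (A * H) \<subseteq> cpoly.span ?P"
  proof
    fix q assume "q \<in> all_derivs (A * H)"
    then obtain js where "q = pderivs js (A * H)" by (auto simp: all_derivs_eq)
    with pderivs_mult_separated[OF assms] obtain a h where "a \<in> all_derivs A" "h \<in> all_derivs H" "q = a * h"
      by metis
    with BA(1) BH(1) show "q \<in> cpoly.span ?P" by (auto intro: mult_mem_span_products)
  qed
  then have "apolar_length (A * H) \<le> card ?P"
    unfolding apolar_length_def using BA(3) BH(3) by (intro cpoly.dim_le_card) simp_all
  also have "\<dots> \<le> card (BA \<times> BH)" using BA(3) BH(3) by (intro card_image_le) simp
  finally show ?thesis using BA(2) BH(2) by (simp add: card_cartesian_product)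
qed

lemma add_monomials_separated_eq_iff:
  fixes a b a' b' :: "nat \<Rightarrow>\<^sub>0 nat"
  assumes "keys a \<subseteq> X" "keys a' \<subseteq> X" "keys b \<subseteq> Y" "keys b' \<subseteq> Y" "X \<inter> Y = {}"
  shows "a + b = a' + b' \<longleftrightarrow> a = a' \<and> b = b'"
proof
  assume eq: "a + b = a' + b'"
  have "lookup a k = lookup a' k \<and> lookup b k = lookup b' k" for k
  proof -
    have "lookup a k + lookup b k = lookup a' k + lookup b' k"
      using arg_cong[OF eq, of "\<lambda>m. lookup m k"] by (simp add: lookup_add)
    moreover have "k \<notin> X \<or> k \<notin> Y" using assms(5) by blast
    then have "lookup a k = 0 \<and> lookup a' k = 0 \<or> lookup b k = 0 \<and> lookup b' k = 0"
      using assms(1-4) by (meson in_keys_iff subsetD)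
    ultimately show ?thesis by auto
  qed
  then show "a = a' \<and> b = b'" by (simp add: poly_mapping_eq_iff fun_eq_iff)
qed simp

lemma lookup_eq_0_if_not_keys_subset: "pvars p \<subseteq> X \<Longrightarrow> \<not> keys m \<subseteq> X \<Longrightarrow> lookup p m = 0"
  unfolding pvars_def by (metis UN_subset_iff in_keys_iff)

lemma lookup_mult_separated:
  assumes "pvars p \<subseteq> X" "pvars q \<subseteq> Y" "X \<inter> Y = {}" "keys a \<subseteq> X" "keys b \<subseteq> Y"
  shows "lookup (p * q) (a + b) = lookup p a * lookup q b"
proof (induction p rule: cpoly_induct)
  case (single a' c)
  then have "keys a' \<subseteq> X" using assms(1) by (auto simp: pvars_def)
  show ?case
  proof (induction q rule: cpoly_induct)
    case (single b' d)
    then have "keys b' \<subseteq> Y" using assms(2) by (auto simp: pvars_def)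
    with \<open>keys a' \<subseteq> X\<close> have "a' + b' = a + b \<longleftrightarrow> a' = a \<and> b' = b"
      using assms(3-5) add_monomials_separated_eq_iff by blast
    then show ?case by (auto simp: mult_single lookup_single when_def)
  qed (simp_all add: distrib_left lookup_add)
qed (simp_all add: distrib_right lookup_add)

lemma sum_products_separated_eq_0D:
  assumes A: "finite A" "cpoly.independent A" "\<And>a. a \<in> A \<Longrightarrow> pvars a \<subseteq> X"
    and B: "finite B" "cpoly.independent B" "\<And>b. b \<in> B \<Longrightarrow> pvars b \<subseteq> Y"
    and XY: "X \<inter> Y = {}"
    and zero: "(\<Sum>(a, b)\<in>A \<times> B. cscale (u (a, b)) (a * b)) = 0"
    and ab: "a \<in> A" "b \<in> B"
  shows "u (a, b) = 0"
proof -
  have "(\<Sum>b\<in>B. u (a, b) * lookup b mb) = 0" if mb: "keys mb \<subseteq> Y" for mb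
  proof -
    define w where "w a = (\<Sum>b\<in>B. u (a, b) * lookup b mb)" for a
    have "lookup (\<Sum>a\<in>A. cscale (w a) a) ma = 0" for ma
    proof (cases "keys ma \<subseteq> X")
      case True
      have "lookup (\<Sum>a\<in>A. cscale (w a) a) ma = (\<Sum>a\<in>A. \<Sum>b\<in>B. u (a, b) * (lookup a ma * lookup b mb))"
        by (simp add: lookup_sum w_def sum_distrib_left mult_ac)
      also have "\<dots> = (\<Sum>(a, b)\<in>A \<times> B. u (a, b) * lookup (a * b) (ma + mb))"
        using lookup_mult_separated[OF A(3) B(3) XY True mb]
        by (simp add: sum.cartesian_product) (intro sum.cong; auto)
      also have "\<dots> = lookup (\<Sum>(a, b)\<in>A \<times> B. cscale (u (a, b)) (a * b)) (ma + mb)"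
        by (simp add: lookup_sum case_prod_unfold)
      finally show ?thesis by (simp add: zero)
    next
      case False
      then show ?thesis using lookup_eq_0_if_not_keys_subset[OF A(3)] by (simp add: lookup_sum)
    qed
    then have "(\<Sum>a\<in>A. cscale (w a) a) = 0" by (simp add: poly_mapping_eq_iff fun_eq_iff)
    then show ?thesis using cpoly.independentD[OF A(2,1) order_refl _ ab(1)] by (simp add: w_def)
  qed
  then have "lookup (\<Sum>b\<in>B. cscale (u (a, b)) b) mb = 0" for mb
    using lookup_eq_0_if_not_keys_subset[OF B(3)] by (cases "keys mb \<subseteq> Y") (simp_all add: lookup_sum)
  then have "(\<Sum>b\<in>B. cscale (u (a, b)) b) = 0" by (simp add: poly_mapping_eq_iff fun_eq_iff)
  then show ?thesis using cpoly.independentD[OF B(2,1) order_refl _ ab(2), of "\<lambda>b. u (a, b)"] by simp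
qed

lemma apolar_length_mult_ge:
  assumes "pvars A \<subseteq> X" "pvars H \<subseteq> Y" "X \<inter> Y = {}"
  shows "apolar_length A * apolar_length H \<le> apolar_length (A * H)"
proof -
  obtain BA where BA: "BA \<subseteq> all_derivs A" "cpoly.independent BA" "all_derivs A \<subseteq> cpoly.span BA"
      "card BA = apolar_length A" "finite BA"
    unfolding apolar_length_def by (rule finitely_spanned_basis[OF finitely_spanned_all_derivs])
  obtain BH where BH: "BH \<subseteq> all_derivs H" "cpoly.independent BH" "all_derivs H \<subseteq> cpoly.span BH"
      "card BH = apolar_length H" "finite BH"
    unfolding apolar_length_def by (rule finitely_spanned_basis[OF finitely_spanned_all_derivs])
  define f where "f = (\<lambda>(a, h). a * h :: cpoly)"
  let ?P = "f ` (BA \<times> BH)"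
  have fin: "finite (BA \<times> BH)" using BA(5) BH(5) by simp
  have pA: "pvars a \<subseteq> X" if "a \<in> BA" for a using that BA(1) assms(1) pvars_all_derivs by blast
  have pH: "pvars h \<subseteq> Y" if "h \<in> BH" for h using that BH(1) assms(2) pvars_all_derivs by blast
  have zero: "u p = 0" if sum: "(\<Sum>p\<in>BA \<times> BH. cscale (u p) (f p)) = 0" and p: "p \<in> BA \<times> BH" for u p
  proof -
    have "(\<lambda>(a, h). cscale (u (a, h)) (a * h)) = (\<lambda>p. cscale (u p) (f p))"
      by (simp add: f_def fun_eq_iff)
    with sum have "(\<Sum>(a, h)\<in>BA \<times> BH. cscale (u (a, h)) (a * h)) = 0" by (simp only:)
    moreover obtain a h where "p = (a, h)" "a \<in> BA" "h \<in> BH" using p by blast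
    ultimately show ?thesis
      using sum_products_separated_eq_0D[OF BA(5,2) pA BH(5,2) pH assms(3), of u a h] by simp
  qed
  have inj: "inj_on f (BA \<times> BH)"
  proof (rule inj_onI, rule ccontr)
    fix p q assume p: "p \<in> BA \<times> BH" and q: "q \<in> BA \<times> BH" and eq: "f p = f q" and "p \<noteq> q"
    define u where "u r = (if r = p then 1 else if r = q then -1 else 0 :: complex)" for r
    have "(\<Sum>r\<in>BA \<times> BH. cscale (u r) (f r))
        = (\<Sum>r\<in>BA \<times> BH. (if r = p then f r else 0) - (if r = q then f r else 0))"
      using \<open>p \<noteq> q\<close> by (intro sum.cong) (auto simp: u_def)
    also have "\<dots> = 0" using p q fin eq by (simp add: sum_subtractf)
    finally have "u p = 0" using zero p by blast
    then show False by (simp add: u_def)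
  qed
  have "cpoly.independent ?P"
  proof (rule cpoly.independent_if_scalars_zero)
    fix g x assume "(\<Sum>x\<in>?P. cscale (g x) x) = 0" "x \<in> ?P"
    then show "g x = 0" using zero[of "g \<circ> f"] by (auto simp: sum.reindex[OF inj])
  qed (use fin in simp)
  then have "card BA * card BH = cpoly.dim ?P"
    using card_image[OF inj] by (simp add: cpoly.dim_eq_card_independent card_cartesian_product)
  also have "\<dots> \<le> apolar_length (A * H)"
    unfolding apolar_length_def
    using BA(1) BH(1) mult_mem_span_all_derivs_mult[OF assms]
    by (intro dim_le_dim_if_subset_span finitely_spanned_all_derivs) (auto simp: f_def)
  finally show ?thesis using BA(4) BH(4) by simp
qed

lemma apolar_length_mult_separated:
  assumes "pvars A \<subseteq> X" "pvars H \<subseteq> Y" "X \<inter> Y = {}"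
  shows "apolar_length (A * H) = apolar_length A * apolar_length H"
  using apolar_length_mult_le[OF assms] apolar_length_mult_ge[OF assms] by (rule antisym)

section \<open>Existence of Waring decompositions\<close>

lemma sum_Pow_insert_alternating:
  fixes g :: "'a set \<Rightarrow> 'b::comm_ring_1"
  assumes "finite F" "x \<notin> F"
  shows "(\<Sum>S\<in>Pow (insert x F). (-1) ^ (Suc (card F) - card S) * g S)
       = (\<Sum>S\<in>Pow F. (-1) ^ (card F - card S) * (g (insert x S) - g S))"
proof -
  let ?h = "\<lambda>S. (-1) ^ (Suc (card F) - card S) * g S"
  have inj: "inj_on (insert x) (Pow F)" using assms(2) by (auto simp: inj_on_def)
  have "(\<Sum>S\<in>Pow (insert x F). ?h S) = (\<Sum>S\<in>Pow F. ?h S) + (\<Sum>S\<in>Pow F. ?h (insert x S))"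
    unfolding Pow_insert using assms
    by (subst sum.union_disjoint) (auto simp: sum.reindex[OF inj])
  also have "\<dots> = (\<Sum>S\<in>Pow F. (-1) ^ (card F - card S) * (g (insert x S) - g S))"
    unfolding sum.distrib[symmetric]
  proof (intro sum.cong refl)
    fix S assume "S \<in> Pow F"
    then have "finite S" "x \<notin> S" "card S \<le> card F"
      using assms by (auto intro: finite_subset card_mono)
    then show "?h S + ?h (insert x S) = (-1) ^ (card F - card S) * (g (insert x S) - g S)"
      by (simp add: Suc_diff_le algebra_simps)
  qed
  finally show ?thesis .
qed

lemma alternating_sum_Pow_power_sum:
  fixes y :: "'a \<Rightarrow> 'b::comm_ring_1"
  assumes "finite A" "m \<le> card A"
  shows "(\<Sum>S\<in>Pow A. (-1) ^ (card A - card S) * sum y S ^ m)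
       = (if m = card A then of_nat (fact (card A)) * prod y A else 0)"
  using assms
proof (induction A arbitrary: m rule: finite_induct)
  case (insert x F)
  let ?n = "card F"
  have "(\<Sum>S\<in>Pow (insert x F). (-1) ^ (card (insert x F) - card S) * sum y S ^ m)
      = (\<Sum>S\<in>Pow F. (-1) ^ (?n - card S) * ((y x + sum y S) ^ m - sum y S ^ m))"
    unfolding sum_Pow_insert_alternating[OF insert.hyps] card_insert_disjoint[OF insert.hyps]
  proof (intro sum.cong refl)
    fix S assume "S \<in> Pow F"
    then have "finite S" "x \<notin> S" using insert.hyps by (auto intro: finite_subset)
    then show "(-1) ^ (?n - card S) * (sum y (insert x S) ^ m - sum y S ^ m)
        = (-1) ^ (?n - card S) * ((y x + sum y S) ^ m - sum y S ^ m)" by simp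
  qed
  also have "\<dots> = (\<Sum>S\<in>Pow F. \<Sum>k<m. (-1) ^ (?n - card S) * (of_nat (m choose k) * y x ^ (m - k) * sum y S ^ k))"
    by (simp add: binomial_ring[of "sum y _" "y x" m, unfolded add.commute[of "sum y _"]]
        sum_distrib_left lessThan_Suc_atMost[symmetric] mult_ac)
  also have "\<dots> = (\<Sum>k<m. of_nat (m choose k) * y x ^ (m - k)
      * (\<Sum>S\<in>Pow F. (-1) ^ (?n - card S) * sum y S ^ k))"
    by (subst sum.swap) (simp add: sum_distrib_left mult_ac)
  also have "\<dots> = (\<Sum>k<m. if k = ?n then of_nat (m choose k) * y x ^ (m - k) * (of_nat (fact ?n) * prod y F) else 0)"
    using insert.prems insert.hyps by (intro sum.cong refl) (simp add: insert.IH)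
  also have "\<dots> = (if m = card (insert x F) then of_nat (fact (card (insert x F))) * prod y (insert x F) else 0)"
    using insert.prems insert.hyps by (auto simp: algebra_simps)
  finally show ?case .
qed simp

text \<open>A monomial \<open>m\<close> is the product of the variables attached to its \<open>mon_deg m\<close> slots
  \<open>(k, s)\<close>, \<open>s < m\<^sub>k\<close>; polarization turns that product into a combination of \<open>d\<close>-th powers
  of sums of slot variables, which are linear forms.\<close>

definition variable_slots :: "(nat \<Rightarrow>\<^sub>0 nat) \<Rightarrow> (nat \<times> nat) set" where
  "variable_slots m = Sigma (keys m) (\<lambda>k. {..<lookup m k})"

lemma finite_variable_slots [simp]: "finite (variable_slots m)"
  by (simp add: variable_slots_def)

lemma card_variable_slots: "card (variable_slots m) = mon_deg m"
  by (simp add: variable_slots_def mon_deg_def card_SigmaI)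

lemma single_eq_prod_variable_slots: "(single m 1 :: cpoly) = (\<Prod>p\<in>variable_slots m. pvar (fst p))"
proof -
  have "(\<Prod>p\<in>variable_slots m. pvar (fst p)) = (\<Prod>k\<in>keys m. \<Prod>s<lookup m k. pvar k)"
    unfolding variable_slots_def by (subst prod.Sigma) (auto simp: split_def)
  also have "\<dots> = (\<Prod>k\<in>keys m. pvar k ^ lookup m k)" by simp
  also have "\<dots> = (\<Prod>k\<in>keys m. single (single k (lookup m k)) 1)" by (simp add: pvar_power)
  also have "\<dots> = single (\<Sum>k\<in>keys m. single k (lookup m k)) 1"
    by (induction rule: finite_induct[OF finite_keys]) (simp_all add: mult_single)
  also have "(\<Sum>k\<in>keys m. single k (lookup m k)) = m"
    by (rule poly_mapping_eqI) (simp add: lookup_sum lookup_single when_def in_keys_iff)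
  finally show ?thesis by simp
qed

lemma single_eq_sum_powers:
  fixes m :: "nat \<Rightarrow>\<^sub>0 nat"
  defines "d \<equiv> mon_deg m"
  shows "(single m 1 :: cpoly) = (\<Sum>S\<in>Pow (variable_slots m).
     cscale ((-1) ^ (d - card S) / of_nat (fact d)) ((\<Sum>p\<in>S. pvar (fst p)) ^ d))"
proof -
  let ?L = "\<lambda>S. (\<Sum>p\<in>S. pvar (fst p)) ^ d"
  have neg: "((-1) :: cpoly) ^ k = single 0 ((-1) ^ k)" for k
    using single_zero_power[of "-1" k] by (simp add: single_uminus)
  have "(\<Sum>S\<in>Pow (variable_slots m). cscale ((-1) ^ (d - card S) / of_nat (fact d)) (?L S))
      = single 0 (1 / of_nat (fact d)) * (\<Sum>S\<in>Pow (variable_slots m). (-1) ^ (d - card S) * ?L S)"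
    by (simp add: sum_distrib_left cscale_eq_mult neg mult_single flip: mult.assoc)
  also have "\<dots> = single 0 (1 / of_nat (fact d)) * (of_nat (fact d) * single m 1)"
    using alternating_sum_Pow_power_sum[OF finite_variable_slots, of d m "\<lambda>p. pvar (fst p)"]
    by (simp add: card_variable_slots d_def single_eq_prod_variable_slots)
  also have "\<dots> = single m 1" by (simp add: mult_single flip: single_of_nat mult.assoc)
  finally show ?thesis ..
qed

lemma waring_decomposition_exists:
  assumes "homogeneous d F" "pvars F \<subseteq> V"
  shows "\<exists>(r::nat) c l. (\<forall>i<r. linear_form_in V (l i)) \<and> F = (\<Sum>i<r. cscale (c i) (l i ^ d))"
proof -
  define Q where "Q = Sigma (keys F) (\<lambda>m. Pow (variable_slots m))"
  define lf where "lf = (\<lambda>(m::nat \<Rightarrow>\<^sub>0 nat, S::(nat \<times> nat) set). \<Sum>p\<in>S. pvar (fst p))"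
  define cf where "cf = (\<lambda>(m, S::(nat \<times> nat) set). lookup F m * ((-1) ^ (d - card S) / of_nat (fact d)))"
  have "F = (\<Sum>m\<in>keys F. cscale (lookup F m) (single m 1))"
    by (subst cpoly_eq_sum_single) (simp add: cscale_single)
  also have "\<dots> = (\<Sum>m\<in>keys F. \<Sum>S\<in>Pow (variable_slots m). cscale (cf (m, S)) (lf (m, S) ^ d))"
  proof (intro sum.cong refl)
    fix m assume "m \<in> keys F"
    then have "mon_deg m = d" using assms(1) by (simp add: homogeneous_def)
    then show "cscale (lookup F m) (single m 1) = (\<Sum>S\<in>Pow (variable_slots m). cscale (cf (m, S)) (lf (m, S) ^ d))"
      by (subst single_eq_sum_powers) (simp add: cpoly.scale_sum_right cf_def lf_def)
  qed
  also have "\<dots> = (\<Sum>q\<in>Q. cscale (cf q) (lf q ^ d))"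
    unfolding Q_def by (subst sum.Sigma) simp_all
  finally have F: "F = (\<Sum>q\<in>Q. cscale (cf q) (lf q ^ d))" .
  have lin: "linear_form_in V (lf q)" if "q \<in> Q" for q
  proof -
    obtain m S where q: "q = (m, S)" "m \<in> keys F" "S \<subseteq> variable_slots m" using \<open>q \<in> Q\<close> by (auto simp: Q_def)
    have "homogeneous 1 (lf q)" unfolding q lf_def by (simp add: homogeneous_sum homogeneous_pvar del: One_nat_def)
    have "pvars (lf q) \<subseteq> (\<Union>p\<in>S. pvars (pvar (fst p)))" unfolding q lf_def prod.case by (rule pvars_sum)
    also have "\<dots> \<subseteq> keys m" using q(3) by (auto simp: variable_slots_def)
    also have "\<dots> \<subseteq> V" using q(2) assms(2) by (auto simp: pvars_def)
    finally have "pvars (lf q) \<subseteq> V" .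
    with \<open>homogeneous 1 (lf q)\<close> show ?thesis by (simp add: linear_form_in_def)
  qed
  have "finite Q" by (simp add: Q_def)
  then obtain h where h: "bij_betw h {..<card Q} Q" using ex_bij_betw_nat_finite lessThan_atLeast0 by metis
  then have "F = (\<Sum>i<card Q. cscale (cf (h i)) (lf (h i) ^ d))"
    unfolding F using sum.reindex_bij_betw[OF h, of "\<lambda>q. cscale (cf q) (lf q ^ d)"] by simp
  moreover have "\<forall>i<card Q. linear_form_in V (lf (h i))" using h lin by (simp add: bij_betwE)
  ultimately show ?thesis by (intro exI[of _ "card Q"] exI[of _ "cf \<circ> h"] exI[of _ "lf \<circ> h"]) simp
qed

lemma waring_rank_decomposition:
  assumes "homogeneous d F" "pvars F \<subseteq> V"
  obtains c l where "\<forall>i<waring_rank V d F. linear_form_in V (l i)"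
    and "F = (\<Sum>i<waring_rank V d F. cscale (c i) (l i ^ d))"
  using LeastI_ex[OF waring_decomposition_exists[OF assms]] unfolding waring_rank_def by blast

section \<open>Derivatives of a sum of powers of linear forms\<close>

locale linear_power_sum =
  fixes I :: "nat set" and l :: "nat \<Rightarrow> cpoly" and c :: "nat \<Rightarrow> complex" and e j :: nat
  assumes finite_I: "finite I"
    and homogeneous_l: "\<And>i. i \<in> I \<Longrightarrow> homogeneous 1 (l i)"
    and lin_coeff_nonzero: "\<And>i. i \<in> I \<Longrightarrow> lin_coeff (l i) j \<noteq> 0"
begin

definition power_sum :: cpoly where
  "power_sum = (\<Sum>i\<in>I. cscale (c i) (l i ^ e))"

text \<open>By \<open>pderivs_linear_form_power\<close>, the derivative \<open>pderivs js power_sum\<close> of order \<open>t\<close> is the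
  image under the linear map \<open>comb t\<close> of a coefficient vector in \<open>\<complex>\<^sup>I\<close>, encoded as the linear
  form \<open>coords t js\<close>. The normalisation by \<open>lin_coeff (l i) j ^ t\<close> makes this vector invariant
  under appending \<open>j\<close> to \<open>js\<close>, i.e. under passing to the derivatives of \<open>pderiv_var j power_sum\<close>.\<close>

definition coords :: "nat \<Rightarrow> nat list \<Rightarrow> cpoly" where
  "coords t js = (\<Sum>i\<in>I. cscale (prod_list (map (lin_coeff (l i)) js) / lin_coeff (l i) j ^ t) (pvar i))"

definition comb :: "nat \<Rightarrow> cpoly \<Rightarrow> cpoly" where
  "comb t v = (\<Sum>i\<in>I. cscale (c i * (\<Prod>k<t. of_nat (e - k)) * lin_coeff (l i) j ^ t * lin_coeff v i)
     (l i ^ (e - t)))"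

lemma lin_coeff_coords:
  "i \<in> I \<Longrightarrow> lin_coeff (coords t js) i = prod_list (map (lin_coeff (l i)) js) / lin_coeff (l i) j ^ t"
  using finite_I by (simp add: coords_def lin_coeff_sum lin_coeff_pvar if_distrib cong: if_cong)

lemma pderivs_power_sum: "pderivs js power_sum = comb (length js) (coords (length js) js)"
  unfolding power_sum_def comb_def pderivs.sum pderivs.scale
  by (intro sum.cong refl)
    (simp add: pderivs_linear_form_power[OF homogeneous_l] lin_coeff_coords lin_coeff_nonzero)

lemma coords_append_replicate: "coords (t + k) (js @ replicate k j) = coords t js"
  unfolding coords_def
  by (intro sum.cong refl) (simp add: lin_coeff_nonzero power_add)

lemma module_hom_comb: "module_hom cscale cscale (comb t)"
  by (rule module_hom_cpolyI)
    (simp_all add: comb_def lin_coeff_add algebra_simps sum.distrib cpoly.scale_sum_right)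

lemma coords_in_span: "coords t js \<in> cpoly.span (pvar ` I)"
  unfolding coords_def by (intro cpoly.span_sum cpoly.span_scale cpoly.span_base) simp

definition coord_vectors :: "nat \<Rightarrow> cpoly set" where
  "coord_vectors t = {coords t js | js. length js = t}"

lemma coord_vectors_subset_span: "coord_vectors t \<subseteq> cpoly.span (pvar ` I)"
  using coords_in_span by (auto simp: coord_vectors_def)

lemma coord_vectors_subset_span_Suc: "coord_vectors t \<subseteq> cpoly.span (coord_vectors (Suc t))"
proof
  fix v assume "v \<in> coord_vectors t"
  then obtain js where "v = coords t js" "length js = t" by (auto simp: coord_vectors_def)
  then have "v \<in> coord_vectors (Suc t)"
    using coords_append_replicate[of t 1 js] by (auto simp: coord_vectors_def intro!: exI[of _ "js @ [j]"])
  then show "v \<in> cpoly.span (coord_vectors (Suc t))" by (rule cpoly.span_base)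
qed

lemma comb_coord_vectors_in_all_derivs_pderiv:
  assumes "v \<in> coord_vectors s" "s < t"
  shows "comb t v \<in> all_derivs (pderiv_var j power_sum)"
proof -
  obtain ks where ks: "v = coords s ks" "length ks = s" using assms(1) by (auto simp: coord_vectors_def)
  obtain n where n: "t - s = Suc n" using assms(2) by (metis Suc_diff_Suc)
  have "comb t v = pderivs (ks @ replicate (t - s) j) power_sum"
    using pderivs_power_sum[of "ks @ replicate (t - s) j"] coords_append_replicate[of s "t - s" ks] ks assms(2)
    by simp
  also have "\<dots> = pderivs (ks @ replicate n j) (pderiv_var j power_sum)"
    unfolding n by (simp flip: replicate_append_same add: pderivs_append)
  finally show ?thesis by (auto simp: all_derivs_eq)
qed

lemma comb_eq_0: "e < t \<Longrightarrow> comb t v = 0"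
  by (auto simp: comb_def intro!: sum.neutral prod_zero bexI[of _ e])

theorem apolar_length_power_sum_le:
  "apolar_length power_sum \<le> apolar_length (pderiv_var j power_sum) + card I"
proof -
  obtain N where N: "\<And>t. finite (N t)"
    "\<And>t. coord_vectors t \<subseteq> cpoly.span ((\<Union>s<t. coord_vectors s) \<union> N t)"
    "\<And>n. (\<Sum>t\<le>n. card (N t)) \<le> card (pvar ` I)"
    using finite_imageI[OF finite_I] coord_vectors_subset_span coord_vectors_subset_span_Suc
    by (rule chain_span_complements[where U = coord_vectors and B = "pvar ` I"]) (rule that)
  define W where "W = (\<Union>t\<le>e. comb t ` N t)"
  have "finite W" using N(1) by (simp add: W_def)
  have "card W \<le> (\<Sum>t\<le>e. card (comb t ` N t))" unfolding W_def by (rule card_UN_le) simp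
  also have "\<dots> \<le> (\<Sum>t\<le>e. card (N t))" by (intro sum_mono card_image_le N(1))
  also have "\<dots> \<le> card I" using N(3)[of e] card_image_le[OF finite_I, of pvar] by linarith
  finally have "card W \<le> card I" .
  have "pderivs js power_sum \<in> cpoly.span (all_derivs (pderiv_var j power_sum) \<union> W)" for js
  proof (cases "length js \<le> e")
    case True
    define t where "t = length js"
    let ?X = "(\<Union>s<t. coord_vectors s) \<union> N t"
    have "coords t js \<in> cpoly.span ?X" using N(2)[of t] by (auto simp: coord_vectors_def t_def)
    then have "comb t (coords t js) \<in> cpoly.span (comb t ` ?X)"
      unfolding module_hom.span_image[OF module_hom_comb] by (rule imageI)
    moreover have "comb t ` ?X \<subseteq> all_derivs (pderiv_var j power_sum) \<union> W"
      using comb_coord_vectors_in_all_derivs_pderiv True by (auto simp: W_def t_def)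
    ultimately show ?thesis unfolding pderivs_power_sum t_def using cpoly.span_mono by blast
  qed (simp add: pderivs_power_sum comb_eq_0 cpoly.span_zero)
  then have "apolar_length power_sum \<le> cpoly.dim (all_derivs (pderiv_var j power_sum) \<union> W)"
    unfolding apolar_length_def using finitely_spanned_all_derivs \<open>finite W\<close>
    by (intro dim_le_dim_if_subset_span finitely_spanned_Un_finite) (auto simp: all_derivs_eq)
  also have "\<dots> \<le> apolar_length (pderiv_var j power_sum) + card W"
    unfolding apolar_length_def by (rule dim_Un_finite_le[OF finitely_spanned_all_derivs \<open>finite W\<close>])
  finally show ?thesis using \<open>card W \<le> card I\<close> by simp
qed

end
section \<open>Lower bounds for the Waring rank\<close>

lemma apolar_length_pderiv_le_waring_rank:
  assumes "homogeneous d F" "pvars F \<subseteq> V"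
  shows "apolar_length (pderiv_var j F) \<le> apolar_length (pderiv_var j (pderiv_var j F)) + waring_rank V d F"
proof -
  define r where "r = waring_rank V d F"
  obtain c l where lin: "\<forall>i<r. linear_form_in V (l i)" and F: "F = (\<Sum>i<r. cscale (c i) (l i ^ d))"
    using waring_rank_decomposition[OF assms] unfolding r_def by blast
  define I where "I = {i \<in> {..<r}. lin_coeff (l i) j \<noteq> 0}"
  define c' where "c' i = c i * (of_nat d * lin_coeff (l i) j)" for i
  interpret linear_power_sum I l c' "d - 1" j
    using lin by unfold_locales (auto simp: I_def linear_form_in_def)
  have "pderiv_var j F = (\<Sum>i<r. cscale (c' i) (l i ^ (d - 1)))"
    unfolding F pderiv.sum pderiv.scale using lin
    by (intro sum.cong refl) (simp add: pderiv_linear_form_power linear_form_in_def c'_def)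
  also have "\<dots> = power_sum"
    unfolding power_sum_def by (rule sum.mono_neutral_right) (auto simp: I_def c'_def)
  finally have "pderiv_var j F = power_sum" .
  moreover have "card I \<le> r" by (rule order_trans[OF card_mono card_lessThan[THEN eq_imp_le]]) (auto simp: I_def)
  ultimately show ?thesis using apolar_length_power_sum_le unfolding r_def by simp
qed

lemma apolar_length_pderiv_mult_le:
  assumes "pvars G \<subseteq> X" "pvars H \<subseteq> Y" "pvars K \<subseteq> Y" "X \<inter> Y = {}" "j \<in> X"
    and "homogeneous d (G * H + K)"
  shows "apolar_length (pderiv_var j G) * apolar_length H
    \<le> apolar_length (pderiv_var j (pderiv_var j G)) * apolar_length H + waring_rank (X \<union> Y) d (G * H + K)"
proof -
  have "pvars (G * H + K) \<subseteq> X \<union> Y" using assms(1-3) pvars_add pvars_mult by blast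
  note bound = apolar_length_pderiv_le_waring_rank[OF assms(6) this, of j]
  have "j \<notin> pvars H" "j \<notin> pvars K" using assms(2-5) by blast+
  then have "pderiv_var j (G * H + K) = pderiv_var j G * H"
    by (simp add: pderiv.add pderiv_mult pderiv_eq_0_if_not_in_pvars)
  moreover from this have "pderiv_var j (pderiv_var j (G * H + K)) = pderiv_var j (pderiv_var j G) * H"
    using \<open>j \<notin> pvars H\<close> by (simp add: pderiv_mult pderiv_eq_0_if_not_in_pvars)
  moreover have "pvars (pderiv_var j G) \<subseteq> X" "pvars (pderiv_var j (pderiv_var j G)) \<subseteq> X"
    using assms(1) pvars_pderiv by (blast intro: order_trans)+
  ultimately show ?thesis
    using bound assms(2,4) by (simp add: apolar_length_mult_separated)
qed

lemma mon_deg_lt_pderivs: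
  "\<forall>m\<in>keys p. mon_deg m < k \<Longrightarrow> m \<in> keys (pderivs js p) \<Longrightarrow> mon_deg m < k"
proof (induction js arbitrary: m)
  case (Cons i js)
  then have "mon_deg (m + single i 1) < k" using keys_pderiv by simp
  then show ?case by (simp add: mon_deg_add)
qed simp

lemma mon_deg_lt_span:
  assumes "q \<in> cpoly.span S" "\<And>p m. p \<in> S \<Longrightarrow> m \<in> keys p \<Longrightarrow> mon_deg m < k"
  shows "\<forall>m\<in>keys q. mon_deg m < k"
  using assms(1)
proof (induction rule: cpoly.span_induct_alt)
  case (step c p q)
  then show ?case using keys_add[of "cscale c p" q] assms(2)[of p] by (auto simp: in_keys_iff)
qed simp

lemma apolar_length_pderiv_less:
  assumes "homogeneous k Q" "Q \<noteq> 0"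
  shows "apolar_length (pderiv_var i Q) < apolar_length Q"
proof -
  have "\<forall>m\<in>keys (pderiv_var i Q). mon_deg m < k"
    using keys_pderiv assms(1) by (fastforce simp: homogeneous_def mon_deg_add)
  then have "\<forall>m\<in>keys q. mon_deg m < k" if "q \<in> cpoly.span (all_derivs (pderiv_var i Q))" for q
    using that by (intro mon_deg_lt_span) (auto simp: all_derivs_eq dest: mon_deg_lt_pderivs)
  moreover obtain m where "m \<in> keys Q" using assms(2) by (auto simp: poly_mapping_eq_iff fun_eq_iff in_keys_iff)
  ultimately have Q: "Q \<notin> cpoly.span (all_derivs (pderiv_var i Q))"
    using assms(1) by (fastforce simp: homogeneous_def)
  have "insert Q (all_derivs (pderiv_var i Q)) \<subseteq> all_derivs Q"
    by (auto simp: all_derivs_eq pderivs_append[of _ "[i]", simplified, symmetric] intro: range_eqI[of _ _ "[]"])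
  then have "cpoly.dim (insert Q (all_derivs (pderiv_var i Q))) \<le> apolar_length Q"
    unfolding apolar_length_def using cpoly.span_superset
    by (intro dim_le_dim_if_subset_span finitely_spanned_all_derivs) blast
  then show ?thesis
    using dim_insert_not_in_span[OF finitely_spanned_all_derivs Q] by (simp add: apolar_length_def)
qed

lemma pderiv_pvar_power: "pderiv_var i (pvar i ^ a) = single (single i (a - 1)) (of_nat a)"
proof -
  have "single i a - single i 1 = single i (a - 1)"
    by (rule poly_mapping_eqI) (simp add: lookup_minus lookup_single when_def)
  then show ?thesis by (simp add: pvar_power pderiv_single)
qed

theorem mainTheorem7:
  fixes X Y :: "nat set"
  assumes "finite X" and "finite Y" and "X \<inter> Y = {}"
  shows
   "(\<forall>(G::cpoly) (H::cpoly) (K::cpoly) d dG dH j.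
       pvars G \<subseteq> X \<and> pvars H \<subseteq> Y \<and> pvars K \<subseteq> Y \<and>
       homogeneous dG G \<and> homogeneous dH H \<and>
       homogeneous d (G * H) \<and> homogeneous d K \<and> j \<in> X \<longrightarrow>
       (int (apolar_length (pderiv_var j G))
          - int (apolar_length (pderiv_var j (pderiv_var j G))))
         * int (apolar_length H)
       \<le> int (waring_rank (X \<union> Y) d (G * H + K)))
  \<and> (\<forall>(H::cpoly) (K::cpoly) d x1 (a::nat).
       x1 \<in> X \<and> a \<ge> 1 \<and> pvars H \<subseteq> Y \<and> pvars K \<subseteq> Y \<and>
       homogeneous d (pvar x1 ^ a * H) \<and> homogeneous d K \<longrightarrow>
       apolar_length H \<le> waring_rank (X \<union> Y) d (pvar x1 ^ a * H + K))"
proof (intro conjI allI impI)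
  fix G H K :: cpoly and d dG dH j
  assume "pvars G \<subseteq> X \<and> pvars H \<subseteq> Y \<and> pvars K \<subseteq> Y \<and> homogeneous dG G \<and> homogeneous dH H \<and>
    homogeneous d (G * H) \<and> homogeneous d K \<and> j \<in> X"
  then have "apolar_length (pderiv_var j G) * apolar_length H
    \<le> apolar_length (pderiv_var j (pderiv_var j G)) * apolar_length H + waring_rank (X \<union> Y) d (G * H + K)"
    using assms(3) by (intro apolar_length_pderiv_mult_le) (simp_all add: homogeneous_add)
  then show "(int (apolar_length (pderiv_var j G)) - int (apolar_length (pderiv_var j (pderiv_var j G))))
      * int (apolar_length H) \<le> int (waring_rank (X \<union> Y) d (G * H + K))"
    unfolding of_nat_le_iff[where 'a=int, symmetric] by (simp add: left_diff_distrib)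
next
  fix H K :: cpoly and d x1 and a :: nat
  assume h: "x1 \<in> X \<and> a \<ge> 1 \<and> pvars H \<subseteq> Y \<and> pvars K \<subseteq> Y \<and>
    homogeneous d (pvar x1 ^ a * H) \<and> homogeneous d K"
  let ?G = "pvar x1 ^ a"
  have "pvars ?G \<subseteq> X" using pvars_power[of "pvar x1" a] h by auto
  then have bound: "apolar_length (pderiv_var x1 ?G) * apolar_length H
    \<le> apolar_length (pderiv_var x1 (pderiv_var x1 ?G)) * apolar_length H + waring_rank (X \<union> Y) d (?G * H + K)"
    using h assms(3) by (intro apolar_length_pderiv_mult_le) (simp_all add: homogeneous_add)
  have "homogeneous (a - 1) (pderiv_var x1 ?G)" by (simp add: pderiv_pvar_power homogeneous_def)
  moreover have "pderiv_var x1 ?G \<noteq> 0"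
    using h by (auto simp: pderiv_pvar_power dest: arg_cong[where f="\<lambda>p. lookup p (single x1 (a - 1))"])
  ultimately have "apolar_length (pderiv_var x1 (pderiv_var x1 ?G)) + 1 \<le> apolar_length (pderiv_var x1 ?G)"
    by (simp add: apolar_length_pderiv_less Suc_leI)
  from mult_right_mono[OF this, of "apolar_length H"] bound
  show "apolar_length H \<le> waring_rank (X \<union> Y) d (?G * H + K)" by (simp add: algebra_simps)
qed

end
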